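(* Let $X$ be a set, let $\mathcal{L}$ be a nest on $X$, and let $Y\subseteq X$. Then $X={\downarrow}Y$ if and only if there exists a cover of $X$ by elements of $\mathcal{L}$ such that no single member of this cover contains $Y$.
   Context: A nest on $X$ is a family of subsets of $X$ totally ordered by inclusion. Define $x\triangleleft_{\mathcal{L}} y$ iff there exists $L\in\mathcal{L}$ with $x\in L$ and $y\notin L$. For $Y\subseteq X$, ${\downarrow}Y=\{x\in X : \exists y\in Y,\ x\triangleleft_{\mathcal{L}} y\}$. A cover of $X$ by elements of $\mathcal{L}$ is a subfamily of $\mathcal{L}$ whose union is $X$. *)

theory Defs
  imports Main
begin

definition nest :: "'a set \<Rightarrow> 'a set set \<Rightarrow> bool" where
  "nest X \<L> \<longleftrightarrow> (\<forall>L\<in>\<L>. L \<subseteq> X) \<and> (\<forall>A\<in>\<L>. \<forall>B\<in>\<L>. A \<subseteq> B \<or> B \<subseteq> A)"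

definition nest_rel :: "'a set set \<Rightarrow> 'a \<Rightarrow> 'a \<Rightarrow> bool" where
  "nest_rel \<L> x y \<longleftrightarrow> (\<exists>L\<in>\<L>. x \<in> L \<and> y \<notin> L)"

definition down_set :: "'a set \<Rightarrow> 'a set set \<Rightarrow> 'a set \<Rightarrow> 'a set" where
  "down_set X \<L> Y = {x \<in> X. \<exists>y\<in>Y. nest_rel \<L> x y}"

definition is_cover_by :: "'a set \<Rightarrow> 'a set set \<Rightarrow> 'a set set \<Rightarrow> bool" where
  "is_cover_by X \<L> \<C> \<longleftrightarrow> \<C> \<subseteq> \<L> \<and> \<Union>\<C> = X"

end

theory Submission
  imports Defs
begin

text \<open>The down-set of Y is the part of X covered by the members of \<L> missing some point of Y,
  so \<open>{L \<in> \<L>. \<not> Y \<subseteq> L}\<close> is the largest admissible cover and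
  X = \<down>Y says exactly that it covers X.\<close>

lemma down_set_eq_Union_not_containing:
  "down_set X \<L> Y = X \<inter> \<Union>{L \<in> \<L>. \<not> Y \<subseteq> L}"
  unfolding down_set_def nest_rel_def by blast

lemma is_cover_by_iff_subset_Union:
  assumes "nest X \<L>" and "\<C> \<subseteq> \<L>"
  shows "is_cover_by X \<L> \<C> \<longleftrightarrow> X \<subseteq> \<Union>\<C>"
  using assms unfolding is_cover_by_def nest_def by blast

theorem theorem4p1:
  fixes X Y :: "'a set" and \<L> :: "'a set set"
  assumes "nest X \<L>" and "Y \<subseteq> X"
  shows "X = down_set X \<L> Y \<longleftrightarrow>
         (\<exists>\<C>. is_cover_by X \<L> \<C> \<and> (\<forall>C\<in>\<C>. \<not> Y \<subseteq> C))"
proof -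
  define \<C>\<^sub>Y where "\<C>\<^sub>Y = {L \<in> \<L>. \<not> Y \<subseteq> L}"
  have "X = down_set X \<L> Y \<longleftrightarrow> X \<subseteq> \<Union>\<C>\<^sub>Y"
    unfolding down_set_eq_Union_not_containing \<C>\<^sub>Y_def by blast
  also have "\<dots> \<longleftrightarrow> is_cover_by X \<L> \<C>\<^sub>Y"
    using is_cover_by_iff_subset_Union[OF assms(1)] \<C>\<^sub>Y_def by auto
  also have "\<dots> \<longleftrightarrow> (\<exists>\<C>. is_cover_by X \<L> \<C> \<and> (\<forall>C\<in>\<C>. \<not> Y \<subseteq> C))"
  proof
    assume "is_cover_by X \<L> \<C>\<^sub>Y"
    then show "\<exists>\<C>. is_cover_by X \<L> \<C> \<and> (\<forall>C\<in>\<C>. \<not> Y \<subseteq> C)"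
      unfolding \<C>\<^sub>Y_def by blast
  next
    assume "\<exists>\<C>. is_cover_by X \<L> \<C> \<and> (\<forall>C\<in>\<C>. \<not> Y \<subseteq> C)"
    then obtain \<C> where "is_cover_by X \<L> \<C>" and "\<C> \<subseteq> \<C>\<^sub>Y"
      unfolding is_cover_by_def \<C>\<^sub>Y_def by blast
    then show "is_cover_by X \<L> \<C>\<^sub>Y"
      using is_cover_by_iff_subset_Union[OF assms(1)] \<C>\<^sub>Y_def by (auto simp: is_cover_by_def)
  qed
  finally show ?thesis .
qed

end
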